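(* Let $G$ be the free group on $\{x,y\}$ and $k$ a field. Then the $k$-subalgebra of $k[G]$ generated by $x+x^{-1}$ and $y+y^{-1}$ is the free $k$-algebra on $\{x+x^{-1},y+y^{-1}\}$.
   Context: The free $k$-algebra on a set $X$ is the algebra of noncommutative polynomials in the variables $X$. *)

theory Defs
  imports Main
begin

text \<open>Letters of the free group on {x,y}: (g, e) where g = False means x, g = True means y,
  and e = True means the inverse letter.  Elements of the free group G are the freely
  reduced words over these letters; the product is concatenation followed by free reduction.\<close>

type_synonym letter = "bool \<times> bool"
type_synonym fgword = "letter list"

definition linv :: "letter \<Rightarrow> letter" where
  "linv c = (fst c, \<not> snd c)"

definition freduce :: "fgword \<Rightarrow> fgword" where
  "freduce xs = foldr (\<lambda>a w. case w of [] \<Rightarrow> [a] | b # w' \<Rightarrow> (if b = linv a then w' else a # w)) xs []"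

definition fg_mult :: "fgword \<Rightarrow> fgword \<Rightarrow> fgword" where
  "fg_mult u v = freduce (u @ v)"

text \<open>Group algebra k[G]: finitely supported functions G \<Rightarrow> k, with convolution product.\<close>
definition ga_delta :: "fgword \<Rightarrow> fgword \<Rightarrow> 'k::field" where
  "ga_delta g = (\<lambda>h. if h = g then 1 else 0)"

definition ga_add :: "(fgword \<Rightarrow> 'k::field) \<Rightarrow> (fgword \<Rightarrow> 'k) \<Rightarrow> fgword \<Rightarrow> 'k" where
  "ga_add f g = (\<lambda>h. f h + g h)"

definition ga_mult :: "(fgword \<Rightarrow> 'k::field) \<Rightarrow> (fgword \<Rightarrow> 'k) \<Rightarrow> fgword \<Rightarrow> 'k" where
  "ga_mult f g = (\<lambda>h. \<Sum>(u, v) \<in> {(u, v). f u \<noteq> 0 \<and> g v \<noteq> 0 \<and> fg_mult u v = h}. f u * g v)"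

definition ga_gen :: "bool \<Rightarrow> fgword \<Rightarrow> 'k::field" where
  "ga_gen c = ga_add (ga_delta [(c, False)]) (ga_delta [(c, True)])"

text \<open>Free k-algebra on two variables X (False) and Y (True): finitely supported functions
  from words over {X,Y} to k (noncommutative polynomials).\<close>
primrec ga_monomial :: "bool list \<Rightarrow> fgword \<Rightarrow> 'k::field" where
  "ga_monomial [] = ga_delta []"
| "ga_monomial (c # w) = ga_mult (ga_gen c) (ga_monomial w)"

definition nc_eval :: "(bool list \<Rightarrow> 'k::field) \<Rightarrow> fgword \<Rightarrow> 'k" where
  "nc_eval p = (\<lambda>h. \<Sum>w \<in> {w. p w \<noteq> 0}. p w * ga_monomial w h)"

end

theory Submission
  imports Defs
begin

text \<open>Expanding a monomial \<open>c\<^sub>1 \<dots> c\<^sub>n\<close> in \<open>x + x\<inverse>\<close>, \<open>y + y\<inverse>\<close> gives a sum of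
  products of \<open>n\<close> letters, so only reduced words of length at most \<open>n\<close> occur.  A positive word
  (no inverse letters) of length \<open>n\<close> can only arise from a product without cancellation, and
  hence only from the positive letters \<open>c\<^sub>1, \<dots>, c\<^sub>n\<close> themselves: its coefficient is \<open>1\<close> for
  the word \<open>c\<^sub>1 \<dots> c\<^sub>n\<close> and \<open>0\<close> for every other positive word of length \<open>n\<close>.  So evaluating a
  nonzero polynomial and reading off the coefficient of the positive word of one of its
  longest monomials \<open>w\<close> recovers the (nonzero) coefficient of \<open>w\<close>.\<close>

lemma freduce_Nil [simp]: "freduce [] = []"
  by (simp add: freduce_def)

lemma freduce_Cons:
  "freduce (a # xs) =
     (case freduce xs of [] \<Rightarrow> [a] | b # w \<Rightarrow> (if b = linv a then w else a # b # w))"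
  by (simp add: freduce_def split: list.split)

lemma length_freduce_le: "length (freduce xs) \<le> length xs"
  by (induction xs) (auto simp: freduce_Cons split: list.split)

lemma freduce_eq_if_length_eq: "length (freduce xs) = length xs \<Longrightarrow> freduce xs = xs"
proof (induction xs)
  case Nil
  then show ?case by simp
next
  case (Cons a xs)
  then show ?case
    using length_freduce_le[of xs]
    by (auto simp: freduce_Cons split: list.splits if_splits)
qed

lemma fg_mult_eq_append_if_length_ge:
  "length u + length v \<le> length (fg_mult u v) \<Longrightarrow> fg_mult u v = u @ v"
  unfolding fg_mult_def
  by (metis freduce_eq_if_length_eq le_antisym length_append length_freduce_le)

definition positive_word :: "bool list \<Rightarrow> fgword" where
  "positive_word w = map (\<lambda>c. (c, False)) w"

lemma length_positive_word [simp]: "length (positive_word w) = length w"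
  by (simp add: positive_word_def)

lemma positive_word_Cons: "positive_word (c # w) = (c, False) # positive_word w"
  by (simp add: positive_word_def)

lemma freduce_positive_word [simp]: "freduce (positive_word w) = positive_word w"
  by (induction w) (auto simp: positive_word_def freduce_Cons linv_def split: list.split)

lemma ga_gen_nonzero_imp: "ga_gen c u \<noteq> (0::'k::field) \<Longrightarrow> u = [(c, False)] \<or> u = [(c, True)]"
  by (auto simp: ga_gen_def ga_add_def ga_delta_def split: if_splits)

lemma ga_gen_positive_letter: "ga_gen c [(c', False)] = (if c' = c then 1 else (0::'k::field))"
  by (simp add: ga_gen_def ga_add_def ga_delta_def)

lemma ga_mult_nonzero_imp:
  assumes "ga_mult f g h \<noteq> 0"
  obtains u v where "f u \<noteq> 0" "g v \<noteq> 0" "fg_mult u v = h"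
proof -
  have "{(u, v). f u \<noteq> 0 \<and> g v \<noteq> 0 \<and> fg_mult u v = h} \<noteq> {}"
    using assms unfolding ga_mult_def by (metis (no_types, lifting) sum.empty)
  then show ?thesis
    using that by blast
qed

lemma ga_mult_eq_single_factorization:
  assumes "fg_mult a b = h"
    and "\<And>u v. f u \<noteq> 0 \<Longrightarrow> g v \<noteq> 0 \<Longrightarrow> fg_mult u v = h \<Longrightarrow> u = a \<and> v = b"
  shows "ga_mult f g h = f a * g b"
proof -
  let ?S = "{(u, v). f u \<noteq> 0 \<and> g v \<noteq> 0 \<and> fg_mult u v = h}"
  have "?S = (if f a * g b = 0 then {} else {(a, b)})"
    using assms by auto
  then show ?thesis
    by (simp add: ga_mult_def)
qed

lemma length_le_if_ga_monomial_nonzero: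
  "ga_monomial w h \<noteq> (0::'k::field) \<Longrightarrow> length h \<le> length w"
proof (induction w arbitrary: h)
  case Nil
  then show ?case by (simp add: ga_delta_def split: if_splits)
next
  case (Cons c w)
  then obtain u v where "ga_gen c u \<noteq> (0::'k)" "ga_monomial w v \<noteq> (0::'k)" "fg_mult u v = h"
    by (auto elim: ga_mult_nonzero_imp)
  with Cons.IH have "length u = 1" "length v \<le> length w" "length h \<le> length (u @ v)"
    using length_freduce_le[of "u @ v"] by (auto dest: ga_gen_nonzero_imp simp: fg_mult_def)
  then show ?case by simp
qed

lemma ga_monomial_factor_positive_word:
  assumes "ga_gen c u \<noteq> (0::'k::field)" "ga_monomial w u' \<noteq> (0::'k)"
    and "fg_mult u u' = positive_word (c' # v')" "length v' = length w"
  shows "u = [(c', False)] \<and> u' = positive_word v'"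
proof -
  have "length u = 1" "length u' \<le> length w"
    using assms(1,2) by (auto dest: ga_gen_nonzero_imp length_le_if_ga_monomial_nonzero)
  then have "u @ u' = positive_word (c' # v')"
    using assms(3,4) fg_mult_eq_append_if_length_ge[of u u'] by simp
  with \<open>length u = 1\<close> show ?thesis
    by (cases u) (auto simp: positive_word_Cons)
qed

lemma ga_monomial_positive_word_same_length:
  "length v = length w \<Longrightarrow>
     ga_monomial w (positive_word v) = (if v = w then 1 else (0::'k::field))"
proof (induction w arbitrary: v)
  case Nil
  then show ?case by (simp add: ga_delta_def positive_word_def)
next
  case (Cons c w)
  then obtain c' v' where v: "v = c' # v'" and len: "length v' = length w"
    by (cases v) auto
  have "fg_mult [(c', False)] (positive_word v') = positive_word v"
    by (metis fg_mult_def freduce_positive_word positive_word_Cons append_Cons append_Nil v)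
  then have "ga_monomial (c # w) (positive_word v) =
      ga_gen c [(c', False)] * (ga_monomial w (positive_word v') :: 'k)"
    unfolding ga_monomial.simps
    by (rule ga_mult_eq_single_factorization)
      (use ga_monomial_factor_positive_word len v in blast)
  also have "\<dots> = (if v = c # w then 1 else 0)"
    using Cons.IH[OF len] by (simp add: ga_gen_positive_letter v)
  finally show ?case .
qed

lemma ga_monomial_positive_word:
  assumes "length w \<le> length v"
  shows "ga_monomial w (positive_word v) = (if v = w then 1 else (0::'k::field))"
proof (cases "length w = length v")
  case True
  then show ?thesis by (simp add: ga_monomial_positive_word_same_length)
next
  case False
  then show ?thesis
    using assms length_le_if_ga_monomial_nonzero[of w "positive_word v"] by auto
qed

theorem mainTheorem5:
  fixes p :: "bool list \<Rightarrow> 'k::field"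
  assumes "finite {w. p w \<noteq> 0}"
    and "nc_eval p = (\<lambda>_. 0)"
  shows "p = (\<lambda>_. 0)"
proof (rule ccontr)
  let ?S = "{w. p w \<noteq> 0}"
  assume "p \<noteq> (\<lambda>_. 0)"
  then have "length ` ?S \<noteq> {}" by auto
  then have "Max (length ` ?S) \<in> length ` ?S"
    using assms(1) by (intro Max_in) auto
  then obtain w where w: "w \<in> ?S" "length w = Max (length ` ?S)"
    by auto
  have longest: "length w' \<le> length w" if "w' \<in> ?S" for w'
    using that w(2) assms(1) by simp
  have "nc_eval p (positive_word w) = (\<Sum>w'\<in>?S. if w' = w then p w' else 0)"
    unfolding nc_eval_def
    by (rule sum.cong) (auto simp: ga_monomial_positive_word longest)
  also have "\<dots> = p w"
    using assms(1) w(1) by simp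
  finally show False
    using assms(2) w(1) by simp
qed

end
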